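(* Let $n \geq 2$. Then $\langle \phi, \chi^{(n,n)} \rangle_{S_{2n}} = 1$.
   Context: Let $\sigma = (1\ 2\ \cdots\ n) \in S_n$, regarded as an element of $S_{2n}$ via the natural inclusion $S_n \subseteq S_{2n}$ (permutations fixing $n+1,\dots,2n$). Let $C = C_{S_{2n}}(\sigma)$ be the centralizer of $\sigma$ in $S_{2n}$, $1_C$ its trivial character, and $\phi = \operatorname{Ind}_C^{S_{2n}} 1_C$. For a partition $\lambda \vdash m$, $\chi^\lambda$ denotes the irreducible complex character of $S_m$ indexed by $\lambda$ in the standard way. $\langle\cdot,\cdot\rangle_{G}$ is the usual inner product of class functions on $G$. *)

theory Defs
  imports Complex_Main "HOL-Combinatorics.Combinatorics" "HOL-Library.FuncSet"
begin

definition Sym :: "nat \<Rightarrow> (nat \<Rightarrow> nat) set" where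
  "Sym m = {p. p permutes {1..m}}"

definition centralizer :: "(nat \<Rightarrow> nat) set \<Rightarrow> (nat \<Rightarrow> nat) \<Rightarrow> (nat \<Rightarrow> nat) set" where
  "centralizer G s = {p \<in> G. p \<circ> s = s \<circ> p}"

definition cf_inner :: "(nat \<Rightarrow> nat) set \<Rightarrow> ((nat \<Rightarrow> nat) \<Rightarrow> complex) \<Rightarrow> ((nat \<Rightarrow> nat) \<Rightarrow> complex) \<Rightarrow> complex" where
  "cf_inner G f g = (\<Sum>x\<in>G. f x * cnj (g x)) / of_nat (card G)"

definition ind_cf :: "(nat \<Rightarrow> nat) set \<Rightarrow> (nat \<Rightarrow> nat) set \<Rightarrow> ((nat \<Rightarrow> nat) \<Rightarrow> complex)
    \<Rightarrow> (nat \<Rightarrow> nat) \<Rightarrow> complex" where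
  "ind_cf G H psi g =
     (\<Sum>x\<in>G. if x \<circ> g \<circ> inv x \<in> H then psi (x \<circ> g \<circ> inv x) else 0) / of_nat (card H)"

definition triv_cf :: "(nat \<Rightarrow> nat) \<Rightarrow> complex" where
  "triv_cf g = 1"

text \<open>Permutation character of S_m on the tabloids of type alpha (a composition of m with
  possibly zero parts), i.e. the character of Ind from the Young subgroup S_alpha of the trivial
  character: number of maps f: {1..m} -> {0..<l} with fibre sizes alpha and f o g = f.
  A composition with a negative entry gives the zero character (usual convention).\<close>
definition young_char :: "nat \<Rightarrow> int list \<Rightarrow> (nat \<Rightarrow> nat) \<Rightarrow> int" where
  "young_char m alpha g =
    (if (\<exists>a\<in>set alpha. a < 0) then 0
     else int (card {f \<in> {1..m} \<rightarrow>\<^sub>E {0..<length alpha}.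
                  (\<forall>i<length alpha. int (card {x\<in>{1..m}. f x = i}) = alpha ! i) \<and>
                  (\<forall>x\<in>{1..m}. f (g x) = f x)}))"

text \<open>Irreducible character chi^lambda of S_m for a partition lambda = (l_1 \<ge> ... \<ge> l_k),
  given as a list, defined by the Frobenius determinantal formula
  chi^lambda = det( xi^(lambda_i - i + j) )_{i,j}.\<close>
definition irr_char :: "nat \<Rightarrow> nat list \<Rightarrow> (nat \<Rightarrow> nat) \<Rightarrow> complex" where
  "irr_char m lam g = of_int (\<Sum>s | s permutes {0..<length lam}.
      sign s * young_char m (map (\<lambda>i. int (lam ! i) - int i + int (s i)) [0..<length lam]) g)"

end

theory Submission
  imports Defs
begin

text \<open>
  By Frobenius reciprocity the inner product is the average of \<open>\<chi>^(n,n)\<close> over the centralizer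
  \<open>C\<close> of \<open>\<sigma>\<close>, and the determinantal formula gives \<open>\<chi>^(n,n)(g) = I\<^sub>n(g) - I\<^sub>n\<^sub>+\<^sub>1(g)\<close>, where
  \<open>I\<^sub>k(g)\<close> counts the \<open>g\<close>-invariant \<open>k\<close>-subsets of \<open>{1..2n}\<close>. Since \<open>\<sigma>\<close> moves every point of
  \<open>A = {1..n}\<close> (this is where \<open>n \<ge> 2\<close> is needed), \<open>C\<close> is the product of the centralizer of \<open>\<sigma>\<close>
  in \<open>Sym(A)\<close> with \<open>Sym(B)\<close>, \<open>B = {n+1..2n}\<close>, and an \<open>r \<circ> t\<close>-invariant set splits into an
  \<open>r\<close>-invariant part of \<open>A\<close> and a \<open>t\<close>-invariant part of \<open>B\<close>. Summing over \<open>t \<in> Sym(B)\<close>,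
  Burnside's lemma counts every \<open>r\<close>-invariant \<open>Z \<subseteq> A\<close> exactly \<open>n!\<close> times in \<open>I\<^sub>n\<close> and, unless
  \<open>Z = {}\<close>, also in \<open>I\<^sub>n\<^sub>+\<^sub>1\<close>; so the difference averages to \<open>1\<close> over \<open>C\<close>.
\<close>

definition invariant_subsets :: "'a set \<Rightarrow> nat \<Rightarrow> ('a \<Rightarrow> 'a) \<Rightarrow> 'a set set" where
  "invariant_subsets S k h = {Z. Z \<subseteq> S \<and> card Z = k \<and> h ` Z = Z}"

lemma finite_invariant_subsets [simp]: "finite S \<Longrightarrow> finite (invariant_subsets S k h)"
  unfolding invariant_subsets_def by (auto intro: finite_subset)

lemma comp_permutes_disjoint_apply:
  assumes "A \<inter> B = {}" "r permutes A" "t permutes B"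
  shows "(r \<circ> t) x = (if x \<in> A then r x else t x)"
  using assms permutes_not_in[of r A] permutes_not_in[of t B] permutes_in_image[of t B]
  by (cases "x \<in> B") auto

lemma permutes_disjoint_commute:
  assumes "A \<inter> B = {}" "r permutes A" "t permutes B"
  shows "r \<circ> t = t \<circ> r"
proof -
  have "B \<inter> A = {}" using assms(1) by blast
  then show ?thesis
    using comp_permutes_disjoint_apply[OF assms] comp_permutes_disjoint_apply[OF _ assms(3,2)]
      assms permutes_not_in[of r A] permutes_not_in[of t B]
    by (auto simp: fun_eq_iff disjoint_iff)
qed

lemma permutes_image_disjoint_Un:
  assumes "A \<inter> B = {}" "p permutes A \<union> B" "p ` A = A"
  shows "p ` B = B"
proof -
  have "p ` A \<inter> p ` B = {}"
    using assms(1) permutes_inj[OF assms(2)] by (simp add: image_Int[symmetric])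
  then show ?thesis
    using permutes_image[OF assms(2)] assms(1,3) by (auto simp: image_Un)
qed

lemma restrict_id_comp_permutes_disjoint:
  assumes "A \<inter> B = {}" "r permutes A" "t permutes B"
  shows "restrict_id (r \<circ> t) A = r" "restrict_id (r \<circ> t) B = t"
  using assms comp_permutes_disjoint_apply[OF assms] permutes_not_in[OF assms(2)]
    permutes_not_in[OF assms(3)]
  by (auto simp: fun_eq_iff restrict_id_def disjoint_iff)

lemma comp_restrict_id_disjoint_Un:
  assumes "A \<inter> B = {}" "p permutes A \<union> B" "p ` A = A"
  shows "restrict_id p A \<circ> restrict_id p B = p"
proof -
  have "p x \<in> B \<longleftrightarrow> x \<in> B" for x
    using permutes_image_disjoint_Un[OF assms] permutes_inj[OF assms(2)]
    by (metis inj_image_mem_iff)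
  then show ?thesis
    using assms(1) permutes_not_in[OF assms(2)] by (auto simp: fun_eq_iff restrict_id_def)
qed

lemma bij_betw_permutes_disjoint_Un:
  assumes "A \<inter> B = {}"
  shows "bij_betw (\<lambda>(r, t). r \<circ> t) ({r. r permutes A} \<times> {t. t permutes B})
           {p. p permutes A \<union> B \<and> p ` A = A}"
proof (rule bij_betw_byWitness[where f' = "\<lambda>p. (restrict_id p A, restrict_id p B)"])
  let ?R = "{r. r permutes A} \<times> {t. t permutes B}"
  let ?S = "{p. p permutes A \<union> B \<and> p ` A = A}"
  show "\<forall>x \<in> ?R. (restrict_id ((\<lambda>(r, t). r \<circ> t) x) A, restrict_id ((\<lambda>(r, t). r \<circ> t) x) B) = x"
    using restrict_id_comp_permutes_disjoint[OF assms] by auto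
  show "\<forall>p \<in> ?S. (\<lambda>(r, t). r \<circ> t) (restrict_id p A, restrict_id p B) = p"
    using comp_restrict_id_disjoint_Un[OF assms] by auto
  show "(\<lambda>(r, t). r \<circ> t) ` ?R \<subseteq> ?S"
  proof (rule image_subsetI)
    fix x assume "x \<in> ?R"
    then obtain r t where x: "x = (r, t)" and rt: "r permutes A" "t permutes B" by blast
    have "t ` A = A"
      using assms permutes_not_in[OF rt(2)] by (force simp: disjoint_iff)
    then have "(r \<circ> t) ` A = A"
      by (metis image_comp permutes_image[OF rt(1)])
    moreover have "r \<circ> t permutes A \<union> B"
      using permutes_subset[OF rt(1), of "A \<union> B"] permutes_subset[OF rt(2), of "A \<union> B"]
      by (auto intro: permutes_compose)
    ultimately show "(\<lambda>(r, t). r \<circ> t) x \<in> ?S"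
      using x by simp
  qed
  show "(\<lambda>p. (restrict_id p A, restrict_id p B)) ` ?S \<subseteq> ?R"
  proof (rule image_subsetI)
    fix p assume "p \<in> ?S"
    then have p: "p permutes A \<union> B" "p ` A = A" by auto
    then show "(restrict_id p A, restrict_id p B) \<in> ?R"
      using permutes_image_disjoint_Un[OF assms p] permutes_inj_on[OF p(1)]
      by (auto intro!: permutes_restrict_id simp: bij_betw_def)
  qed
qed

lemma card_permutes_setwise_stabilizer:
  assumes "finite B" "Z \<subseteq> B"
  shows "card {t. t permutes B \<and> t ` Z = Z} = fact (card Z) * fact (card B - card Z)"
proof -
  have "Z \<union> (B - Z) = B" using assms(2) by blast
  then have "card {t. t permutes B \<and> t ` Z = Z} = card ({r. r permutes Z} \<times> {t. t permutes B - Z})"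
    using bij_betw_same_card[OF bij_betw_permutes_disjoint_Un[of Z "B - Z"]] by auto
  also have "\<dots> = fact (card Z) * fact (card (B - Z))"
    using assms by (simp add: card_cartesian_product card_permutations finite_subset)
  finally show ?thesis
    using assms by (simp add: card_Diff_subset finite_subset)
qed

text \<open>Burnside's lemma for the transitive action of the symmetric group on the \<open>k\<close>-subsets.\<close>
lemma sum_card_invariant_subsets:
  assumes "finite B"
  shows "(\<Sum>t | t permutes B. card (invariant_subsets B k t))
           = (if k \<le> card B then fact (card B) else 0)"
proof -
  define X where "X = {Z. Z \<subseteq> B \<and> card Z = k}"
  have "(\<Sum>t | t permutes B. card (invariant_subsets B k t))
      = (\<Sum>t | t permutes B. \<Sum>Z\<in>X. if t ` Z = Z then 1 else 0)"
    using assms by (intro sum.cong) (simp_all add: X_def invariant_subsets_def sum.If_cases Int_def)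
  also have "\<dots> = (\<Sum>Z\<in>X. \<Sum>t | t permutes B. if t ` Z = Z then 1 else 0)"
    by (rule sum.swap)
  also have "\<dots> = (\<Sum>Z\<in>X. fact k * fact (card B - k))"
    using assms card_permutes_setwise_stabilizer[OF assms]
    by (intro sum.cong) (simp_all add: X_def finite_permutations sum.If_cases Int_def conj_commute)
  also have "\<dots> = (card B choose k) * (fact k * fact (card B - k))"
    using n_subsets[OF assms, of k] by (simp add: X_def)
  also have "\<dots> = (if k \<le> card B then fact (card B) else 0)"
    using binomial_fact_lemma[of k "card B"] by (auto simp: ac_simps)
  finally show ?thesis .
qed

lemma image_comp_permutes_disjoint:
  assumes "A \<inter> B = {}" "r permutes A" "t permutes B" "Z \<subseteq> A \<union> B"
  shows "(r \<circ> t) ` Z = r ` (Z \<inter> A) \<union> t ` (Z \<inter> B)"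
proof -
  have "Z = (Z \<inter> A) \<union> (Z \<inter> B)" using assms(4) by blast
  then have "(r \<circ> t) ` Z = (r \<circ> t) ` (Z \<inter> A) \<union> (r \<circ> t) ` (Z \<inter> B)"
    by (metis image_Un)
  also have "\<dots> = r ` (Z \<inter> A) \<union> t ` (Z \<inter> B)"
    using assms(1) comp_permutes_disjoint_apply[OF assms(1-3)]
    by (intro arg_cong2[where f = "(\<union>)"] image_cong) auto
  finally show ?thesis .
qed

lemma comp_permutes_disjoint_invariant_iff:
  assumes AB: "A \<inter> B = {}" and rt: "r permutes A" "t permutes B" and Z: "Z \<subseteq> A \<union> B"
  shows "(r \<circ> t) ` Z = Z \<longleftrightarrow> r ` (Z \<inter> A) = Z \<inter> A \<and> t ` (Z \<inter> B) = Z \<inter> B"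
proof -
  have r_A: "r ` (Z \<inter> A) \<subseteq> A" and t_B: "t ` (Z \<inter> B) \<subseteq> B"
    using permutes_in_image[OF rt(1)] permutes_in_image[OF rt(2)] by auto
  have split: "P \<union> Q = Z \<longleftrightarrow> P = Z \<inter> A \<and> Q = Z \<inter> B" if "P \<subseteq> A" "Q \<subseteq> B" for P Q
    using that AB Z by blast
  show ?thesis
    unfolding image_comp_permutes_disjoint[OF AB rt Z] by (rule split[OF r_A t_B])
qed

lemma card_invariant_subsets_comp_permutes_disjoint:
  assumes AB: "A \<inter> B = {}" and fin: "finite A" "finite B"
    and rt: "r permutes A" "t permutes B" and A_k: "card A \<le> k"
  shows "card (invariant_subsets (A \<union> B) k (r \<circ> t))
       = (\<Sum>Z\<in>{Z. Z \<subseteq> A \<and> r ` Z = Z}. card (invariant_subsets B (k - card Z) t))"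
proof -
  let ?P = "SIGMA Z:{Z. Z \<subseteq> A \<and> r ` Z = Z}. invariant_subsets B (k - card Z) t"
  let ?U = "\<lambda>(Z\<^sub>1, Z\<^sub>2). Z\<^sub>1 \<union> Z\<^sub>2"
  have "bij_betw ?U ?P (invariant_subsets (A \<union> B) k (r \<circ> t))"
  proof (rule bij_betw_byWitness[where f' = "\<lambda>Z. (Z \<inter> A, Z \<inter> B)"])
    show "\<forall>Z\<in>invariant_subsets (A \<union> B) k (r \<circ> t). ?U (Z \<inter> A, Z \<inter> B) = Z"
      by (auto simp: invariant_subsets_def)
    show "\<forall>Z\<in>?P. (?U Z \<inter> A, ?U Z \<inter> B) = Z"
      using AB by (auto simp: invariant_subsets_def)
    show "?U ` ?P \<subseteq> invariant_subsets (A \<union> B) k (r \<circ> t)"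
    proof clarsimp
      fix Z\<^sub>1 Z\<^sub>2 assume Z\<^sub>1: "Z\<^sub>1 \<subseteq> A" "r ` Z\<^sub>1 = Z\<^sub>1"
        and Z\<^sub>2: "Z\<^sub>2 \<in> invariant_subsets B (k - card Z\<^sub>1) t"
      have "card Z\<^sub>1 \<le> k" using card_mono[OF fin(1) Z\<^sub>1(1)] A_k by linarith
      moreover have "card (Z\<^sub>1 \<union> Z\<^sub>2) = card Z\<^sub>1 + card Z\<^sub>2"
        using Z\<^sub>1 Z\<^sub>2 AB fin
        by (intro card_Un_disjoint) (auto simp: invariant_subsets_def intro: finite_subset)
      moreover have "(Z\<^sub>1 \<union> Z\<^sub>2) \<inter> A = Z\<^sub>1" "(Z\<^sub>1 \<union> Z\<^sub>2) \<inter> B = Z\<^sub>2"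
        using Z\<^sub>1 Z\<^sub>2 AB by (auto simp: invariant_subsets_def)
      ultimately show "Z\<^sub>1 \<union> Z\<^sub>2 \<in> invariant_subsets (A \<union> B) k (r \<circ> t)"
        using Z\<^sub>1 Z\<^sub>2 comp_permutes_disjoint_invariant_iff[OF AB rt, of "Z\<^sub>1 \<union> Z\<^sub>2"]
        by (auto simp: invariant_subsets_def)
    qed
    show "(\<lambda>Z. (Z \<inter> A, Z \<inter> B)) ` invariant_subsets (A \<union> B) k (r \<circ> t) \<subseteq> ?P"
    proof (rule image_subsetI)
      fix Z assume "Z \<in> invariant_subsets (A \<union> B) k (r \<circ> t)"
      then have Z: "Z \<subseteq> A \<union> B" "card Z = k" "(r \<circ> t) ` Z = Z"
        by (auto simp: invariant_subsets_def)
      have "card Z = card (Z \<inter> A) + card (Z \<inter> B)"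
        using Z(1) AB fin by (subst card_Un_disjoint[symmetric]) (auto intro: arg_cong[where f = card])
      then show "(Z \<inter> A, Z \<inter> B) \<in> ?P"
        using Z comp_permutes_disjoint_invariant_iff[OF AB rt Z(1)]
        by (auto simp: invariant_subsets_def)
    qed
  qed
  then show ?thesis
    using fin by (simp add: bij_betw_same_card[symmetric] finite_subset)
qed

lemma sum_card_invariant_subsets_comp_permutes_disjoint:
  assumes AB: "A \<inter> B = {}" and fin: "finite A" "finite B" and r: "r permutes A"
    and "card A \<le> k"
  shows "(\<Sum>t | t permutes B. card (invariant_subsets (A \<union> B) k (r \<circ> t)))
       = (\<Sum>Z\<in>{Z. Z \<subseteq> A \<and> r ` Z = Z}. if k - card Z \<le> card B then fact (card B) else 0)"
proof -
  have "(\<Sum>t | t permutes B. card (invariant_subsets (A \<union> B) k (r \<circ> t)))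
      = (\<Sum>t | t permutes B. \<Sum>Z\<in>{Z. Z \<subseteq> A \<and> r ` Z = Z}. card (invariant_subsets B (k - card Z) t))"
    using card_invariant_subsets_comp_permutes_disjoint[OF AB fin r _ assms(5)] by simp
  also have "\<dots> = (\<Sum>Z\<in>{Z. Z \<subseteq> A \<and> r ` Z = Z}. \<Sum>t | t permutes B. card (invariant_subsets B (k - card Z) t))"
    by (rule sum.swap)
  also have "\<dots> = (\<Sum>Z\<in>{Z. Z \<subseteq> A \<and> r ` Z = Z}. if k - card Z \<le> card B then fact (card B) else 0)"
    using sum_card_invariant_subsets[OF fin(2)] by simp
  finally show ?thesis .
qed

text \<open>Only the empty \<open>r\<close>-invariant subset of \<open>A\<close> fails to contribute for \<open>k + 1\<close>,
  so the difference is the single term \<open>k!\<close>.\<close>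
lemma sum_diff_card_invariant_subsets_comp_permutes_disjoint:
  assumes AB: "A \<inter> B = {}" and fin: "finite A" "finite B" and r: "r permutes A"
    and card_A: "card A = k" and card_B: "card B = k"
  shows "(\<Sum>t | t permutes B. int (card (invariant_subsets (A \<union> B) k (r \<circ> t)))
                             - int (card (invariant_subsets (A \<union> B) (k + 1) (r \<circ> t))))
       = int (fact k)"
proof -
  define F where "F = {Z. Z \<subseteq> A \<and> r ` Z = Z}"
  have "finite F" "{} \<in> F" using fin(1) by (simp_all add: F_def)
  have nonempty: "k + 1 - card Z \<le> k \<longleftrightarrow> Z \<noteq> {}" if "Z \<in> F" for Z
  proof -
    have "finite Z" using that fin(1) by (auto simp: F_def intro: finite_subset)
    then have "Z \<noteq> {} \<longleftrightarrow> card Z > 0" by (simp add: card_gt_0_iff)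
    then show ?thesis by linarith
  qed
  have "(\<Sum>t | t permutes B. card (invariant_subsets (A \<union> B) k (r \<circ> t)))
      = (\<Sum>Z\<in>F. fact k)"
    using sum_card_invariant_subsets_comp_permutes_disjoint[OF AB fin r, of k] card_A
    unfolding card_B by (simp add: F_def)
  also have "\<dots> = fact k + (\<Sum>Z\<in>F - {{}}. fact k)"
    using \<open>finite F\<close> \<open>{} \<in> F\<close> by (rule sum.remove)
  also have "(\<Sum>Z\<in>F - {{}}. fact k) = (\<Sum>Z\<in>F. if k + 1 - card Z \<le> k then fact k else 0 :: nat)"
    using \<open>finite F\<close> nonempty by (simp add: sum.If_cases Int_def set_diff_eq)
  also have "\<dots> = (\<Sum>t | t permutes B. card (invariant_subsets (A \<union> B) (k + 1) (r \<circ> t)))"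
    using sum_card_invariant_subsets_comp_permutes_disjoint[OF AB fin r, of "k + 1"] card_A
    unfolding card_B by (simp add: F_def)
  finally show ?thesis
    by (simp add: sum_subtractf comp_def flip: of_nat_sum)
qed

lemma bij_image_eq_iff_vimage_eq:
  assumes "bij g"
  shows "g ` Z = Z \<longleftrightarrow> g -` Z = Z"
  using assms by (metis bij_is_inj bij_is_surj inj_vimage_image_eq surj_image_vimage_eq)

lemma card_invariant_subsets_conj:
  assumes x: "x permutes S"
  shows "card (invariant_subsets S k (x \<circ> g \<circ> inv x)) = card (invariant_subsets S k g)"
proof -
  have x_inv: "inv x ` x ` W = W" "x ` inv x ` W = W" for W
    using permutes_inj[OF x] permutes_surj[OF x] by (simp_all add: image_inv_f_f image_f_inv_f)
  have sub: "x ` W \<subseteq> S \<longleftrightarrow> W \<subseteq> S" "inv x ` W \<subseteq> S \<longleftrightarrow> W \<subseteq> S" for W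
    using permutes_in_image[OF x] permutes_in_image[OF permutes_inv[OF x]] by blast+
  have card: "card (x ` W) = card W" "card (inv x ` W) = card W" for W
    using permutes_inj[OF x] permutes_inj[OF permutes_inv[OF x]]
    by (simp_all add: card_image inj_on_subset)
  have conj_image: "(x \<circ> g \<circ> inv x) ` W = x ` g ` inv x ` W" for W
    by (simp add: image_comp)
  have "bij_betw ((`) (inv x)) (invariant_subsets S k (x \<circ> g \<circ> inv x)) (invariant_subsets S k g)"
  proof (rule bij_betw_byWitness[where f' = "(`) x"])
    show "\<forall>W\<in>invariant_subsets S k (x \<circ> g \<circ> inv x). x ` inv x ` W = W"
      "\<forall>Z\<in>invariant_subsets S k g. inv x ` x ` Z = Z"
      using x_inv by simp_all
    show "(`) (inv x) ` invariant_subsets S k (x \<circ> g \<circ> inv x) \<subseteq> invariant_subsets S k g"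
    proof (rule image_subsetI)
      fix W assume "W \<in> invariant_subsets S k (x \<circ> g \<circ> inv x)"
      then have W: "W \<subseteq> S" "card W = k" "x ` g ` inv x ` W = W"
        by (simp_all only: invariant_subsets_def conj_image mem_Collect_eq)
      have "g ` inv x ` W = inv x ` x ` g ` inv x ` W" by (simp only: x_inv)
      also have "\<dots> = inv x ` W" by (simp only: W(3))
      finally show "inv x ` W \<in> invariant_subsets S k g"
        using W sub card by (simp add: invariant_subsets_def)
    qed
    show "(`) x ` invariant_subsets S k g \<subseteq> invariant_subsets S k (x \<circ> g \<circ> inv x)"
    proof (rule image_subsetI)
      fix Z assume "Z \<in> invariant_subsets S k g"
      then have Z: "Z \<subseteq> S" "card Z = k" "g ` Z = Z"
        by (simp_all add: invariant_subsets_def)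
      have "(x \<circ> g \<circ> inv x) ` x ` Z = x ` Z" by (simp only: conj_image x_inv Z(3))
      then show "x ` Z \<in> invariant_subsets S k (x \<circ> g \<circ> inv x)"
        using Z sub card by (simp add: invariant_subsets_def)
    qed
  qed
  then show ?thesis by (rule bij_betw_same_card)
qed

lemma young_char_two_parts:
  assumes g: "g permutes {1..m}" and ab: "a + b = m"
  shows "young_char m [int a, int b] g = int (card (invariant_subsets {1..m} a g))"
proof -
  define M where "M = {1..m}"
  have "finite M" "card M = m" by (simp_all add: M_def)
  have g_M: "g x \<in> M \<longleftrightarrow> x \<in> M" for x
    using permutes_in_image[OF g] by (simp add: M_def)
  have g_inv: "g ` Z = Z \<longleftrightarrow> g -` Z = Z" for Z
    using bij_image_eq_iff_vimage_eq[OF permutes_bij[OF g]] .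
  define F where "F = {f \<in> M \<rightarrow>\<^sub>E {0..<2::nat}. card {x \<in> M. f x = 0} = a
                   \<and> card {x \<in> M. f x = 1} = b \<and> (\<forall>x\<in>M. f (g x) = f x)}"
  define tabloid where "tabloid Z = restrict (\<lambda>x. if x \<in> Z then 0 else 1 :: nat) M" for Z
  have "young_char m [int a, int b] g = int (card F)"
    unfolding young_char_def F_def M_def numeral_2_eq_2 by (simp add: All_less_Suc2)
  moreover have "bij_betw (\<lambda>f. {x \<in> M. f x = 0}) F (invariant_subsets M a g)"
  proof (rule bij_betw_byWitness[where f' = tabloid])
    show "\<forall>f\<in>F. tabloid {x \<in> M. f x = 0} = f"
    proof
      fix f assume "f \<in> F"
      then have "f \<in> M \<rightarrow>\<^sub>E {0..<2}" by (simp add: F_def)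
      then show "tabloid {x \<in> M. f x = 0} = f"
        by (auto simp: tabloid_def fun_eq_iff PiE_iff less_2_cases_iff extensional_def)
    qed
    show "\<forall>Z\<in>invariant_subsets M a g. {x \<in> M. tabloid Z x = 0} = Z"
      by (auto simp: invariant_subsets_def tabloid_def)
    show "(\<lambda>f. {x \<in> M. f x = 0}) ` F \<subseteq> invariant_subsets M a g"
    proof (rule image_subsetI)
      fix f assume f: "f \<in> F"
      then have "g -` {x \<in> M. f x = 0} = {x \<in> M. f x = 0}"
        using g_M by (auto simp: F_def)
      then show "{x \<in> M. f x = 0} \<in> invariant_subsets M a g"
        using f g_inv by (auto simp: F_def invariant_subsets_def)
    qed
    show "tabloid ` invariant_subsets M a g \<subseteq> F"
    proof (rule image_subsetI)
      fix Z assume "Z \<in> invariant_subsets M a g"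
      then have Z: "Z \<subseteq> M" "card Z = a" "g -` Z = Z"
        using g_inv by (auto simp: invariant_subsets_def)
      have "{x \<in> M. tabloid Z x = 0} = Z" "{x \<in> M. tabloid Z x = 1} = M - Z"
        using Z(1) by (auto simp: tabloid_def)
      moreover have "card (M - Z) = b"
        using Z(1,2) ab \<open>finite M\<close> \<open>card M = m\<close> by (simp add: card_Diff_subset finite_subset)
      moreover have "tabloid Z (g x) = tabloid Z x" if "x \<in> M" for x
        using that g_M Z(3) by (auto simp: tabloid_def)
      ultimately show "tabloid Z \<in> F"
        using Z(2) by (auto simp: F_def tabloid_def)
    qed
  qed
  ultimately show ?thesis
    by (simp add: M_def bij_betw_same_card)
qed

lemma irr_char_two_rows:
  "irr_char m [a, b] g = of_int (young_char m [int a, int b] g - young_char m [int a + 1, int b - 1] g)"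
proof -
  have indices: "[0..<length [a, b]] = [0, 1]" by simp
  have "{0..<length [a, b]} = {0, 1}" by auto
  then have perms: "{s. s permutes {0..<length [a, b]}} = {id, Transposition.transpose 0 1}"
    using permutes_doubleton_iff[of _ "0::nat" 1] by auto
  have "id \<noteq> Transposition.transpose (0::nat) 1"
    by (metis transpose_apply_first zero_neq_one id_apply)
  then show ?thesis
    unfolding irr_char_def perms indices
    by (simp add: sign_swap_id)
qed

lemma irr_char_equal_rows:
  assumes "g permutes {1..2 * n}" "n \<ge> 1"
  shows "irr_char (2 * n) [n, n] g
           = of_int (int (card (invariant_subsets {1..2 * n} n g))
                     - int (card (invariant_subsets {1..2 * n} (n + 1) g)))"
proof -
  have "int n - 1 = int (n - 1)" "(n + 1) + (n - 1) = 2 * n" using assms(2) by simp_all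
  then show ?thesis
    using young_char_two_parts[OF assms(1), of n n] young_char_two_parts[OF assms(1), of "n + 1" "n - 1"]
    by (simp add: irr_char_two_rows add.commute)
qed

lemma finite_Sym [simp]: "finite (Sym m)"
  by (simp add: Sym_def finite_permutations)

lemma id_in_Sym [simp]: "id \<in> Sym m"
  by (simp add: Sym_def)

lemma conj_in_Sym: "x \<in> Sym m \<Longrightarrow> g \<in> Sym m \<Longrightarrow> x \<circ> g \<circ> inv x \<in> Sym m"
  by (auto simp: Sym_def intro!: permutes_compose permutes_inv)

lemma sum_Sym_conj:
  assumes "x \<in> Sym m"
  shows "(\<Sum>g\<in>Sym m. f (x \<circ> g \<circ> inv x)) = (\<Sum>g\<in>Sym m. f g)"
proof (rule sum.reindex_bij_witness[where i = "\<lambda>h. inv x \<circ> h \<circ> x" and j = "\<lambda>g. x \<circ> g \<circ> inv x"])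
  have x: "x permutes {1..m}" using assms by (simp add: Sym_def)
  then have "inv x \<in> Sym m" "inv (inv x) = x"
    by (simp_all add: Sym_def permutes_inv permutes_inv_inv)
  then show "inv x \<circ> h \<circ> x \<in> Sym m" if "h \<in> Sym m" for h
    using conj_in_Sym[of "inv x" m h] that by simp
  show "inv x \<circ> (x \<circ> g \<circ> inv x) \<circ> x = g" "x \<circ> (inv x \<circ> g \<circ> x) \<circ> inv x = g" for g
    by (simp_all add: fun_eq_iff permutes_inverses[OF x])
qed (use assms conj_in_Sym in auto)

lemma cf_inner_ind_triv_cf:
  assumes H: "H \<subseteq> Sym m"
    and class_fun: "\<And>x g. x \<in> Sym m \<Longrightarrow> g \<in> Sym m \<Longrightarrow> \<psi> (x \<circ> g \<circ> inv x) = \<psi> g"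
  shows "cf_inner (Sym m) (ind_cf (Sym m) H triv_cf) \<psi> = cnj (\<Sum>h\<in>H. \<psi> h) / of_nat (card H)"
proof -
  let ?G = "Sym m"
  have "card ?G \<noteq> 0" using id_in_Sym[of m] by (metis card_0_eq empty_iff finite_Sym)
  have "(\<Sum>g\<in>?G. (\<Sum>x\<in>?G. if x \<circ> g \<circ> inv x \<in> H then triv_cf (x \<circ> g \<circ> inv x) else 0) * cnj (\<psi> g))
      = (\<Sum>x\<in>?G. \<Sum>g\<in>?G. if x \<circ> g \<circ> inv x \<in> H then cnj (\<psi> (x \<circ> g \<circ> inv x)) else 0)"
    by (subst sum.swap) (auto simp: sum_distrib_right triv_cf_def class_fun conj_in_Sym intro!: sum.cong)
  also have "\<dots> = (\<Sum>x\<in>?G. \<Sum>h\<in>?G. if h \<in> H then cnj (\<psi> h) else 0)"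
    by (intro sum.cong refl sum_Sym_conj[where f = "\<lambda>h. if h \<in> H then cnj (\<psi> h) else 0"])
  also have "\<dots> = of_nat (card ?G) * cnj (\<Sum>h\<in>H. \<psi> h)"
    using H by (simp add: sum.If_cases Int_absorb1)
  finally show ?thesis
    using \<open>card ?G \<noteq> 0\<close> by (simp add: cf_inner_def ind_cf_def sum_divide_distrib[symmetric])
qed

lemma commuting_permutes_image_support:
  assumes "inj p" "finite A" and \<sigma>: "\<sigma> permutes A" "\<forall>x\<in>A. \<sigma> x \<noteq> x"
    and comm: "p \<circ> \<sigma> = \<sigma> \<circ> p"
  shows "p ` A = A"
proof (rule endo_inj_surj[OF assms(2) _ inj_on_subset[OF assms(1) subset_UNIV]])
  show "p ` A \<subseteq> A"
  proof clarify
    fix x assume "x \<in> A"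
    have "p (\<sigma> x) = \<sigma> (p x)" using comm by (metis comp_apply)
    then show "p x \<in> A"
      using \<sigma> \<open>x \<in> A\<close> permutes_not_in[OF \<sigma>(1), of "p x"] injD[OF assms(1)] by metis
  qed
qed

lemma bij_betw_centralizer_permutes_disjoint_Un:
  assumes AB: "A \<inter> B = {}" and "finite A"
    and \<sigma>: "\<sigma> permutes A" "\<forall>x\<in>A. \<sigma> x \<noteq> x"
  shows "bij_betw (\<lambda>(r, t). r \<circ> t) ({r. r permutes A \<and> r \<circ> \<sigma> = \<sigma> \<circ> r} \<times> {t. t permutes B})
           {p. p permutes A \<union> B \<and> p \<circ> \<sigma> = \<sigma> \<circ> p}"
proof (rule bij_betw_subset[OF bij_betw_permutes_disjoint_Un[OF AB]])
  have comp_commute: "r \<circ> t \<circ> \<sigma> = \<sigma> \<circ> (r \<circ> t) \<longleftrightarrow> r \<circ> \<sigma> = \<sigma> \<circ> r"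
    if "r permutes A" "t permutes B" for r t
  proof -
    have "r \<circ> t \<circ> \<sigma> = r \<circ> \<sigma> \<circ> t" "\<sigma> \<circ> (r \<circ> t) = \<sigma> \<circ> r \<circ> t"
      using permutes_disjoint_commute[OF AB \<sigma>(1) that(2)] by (simp_all add: comp_assoc)
    moreover have "r \<circ> \<sigma> = \<sigma> \<circ> r" if "r \<circ> \<sigma> \<circ> t = \<sigma> \<circ> r \<circ> t"
    proof -
      have "r \<circ> \<sigma> \<circ> (t \<circ> inv t) = \<sigma> \<circ> r \<circ> (t \<circ> inv t)"
        using that by (simp flip: comp_assoc)
      then show ?thesis by (simp add: permutes_inv_o[OF \<open>t permutes B\<close>])
    qed
    ultimately show ?thesis by auto
  qed
  show "{r. r permutes A \<and> r \<circ> \<sigma> = \<sigma> \<circ> r} \<times> {t. t permutes B} \<subseteq> {r. r permutes A} \<times> {t. t permutes B}"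
    by blast
  show "(\<lambda>(r, t). r \<circ> t) ` ({r. r permutes A \<and> r \<circ> \<sigma> = \<sigma> \<circ> r} \<times> {t. t permutes B})
          = {p. p permutes A \<union> B \<and> p \<circ> \<sigma> = \<sigma> \<circ> p}"
  proof (intro equalityI subsetI)
    fix p assume "p \<in> (\<lambda>(r, t). r \<circ> t) ` ({r. r permutes A \<and> r \<circ> \<sigma> = \<sigma> \<circ> r} \<times> {t. t permutes B})"
    then obtain r t where rt: "p = r \<circ> t" "r permutes A" "r \<circ> \<sigma> = \<sigma> \<circ> r" "t permutes B" by auto
    then show "p \<in> {p. p permutes A \<union> B \<and> p \<circ> \<sigma> = \<sigma> \<circ> p}"
      using bij_betwE[OF bij_betw_permutes_disjoint_Un[OF AB]] comp_commute by auto
  next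
    fix p assume "p \<in> {p. p permutes A \<union> B \<and> p \<circ> \<sigma> = \<sigma> \<circ> p}"
    then have p: "p permutes A \<union> B" "p \<circ> \<sigma> = \<sigma> \<circ> p" by auto
    then have "p ` A = A"
      using commuting_permutes_image_support[OF permutes_inj[OF p(1)] assms(2) \<sigma>] by simp
    then obtain r t where "r permutes A" "t permutes B" "p = r \<circ> t"
      using bij_betw_imp_surj_on[OF bij_betw_permutes_disjoint_Un[OF AB]] p(1) by force
    then show "p \<in> (\<lambda>(r, t). r \<circ> t) ` ({r. r permutes A \<and> r \<circ> \<sigma> = \<sigma> \<circ> r} \<times> {t. t permutes B})"
      using comp_commute p(2) by auto
  qed
qed

lemma sum_centralizer_diff_card_invariant_subsets:
  assumes AB: "A \<inter> B = {}" and fin: "finite A" "finite B"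
    and \<sigma>: "\<sigma> permutes A" "\<forall>x\<in>A. \<sigma> x \<noteq> x" and card: "card A = k" "card B = k"
  defines "C \<equiv> {p. p permutes A \<union> B \<and> p \<circ> \<sigma> = \<sigma> \<circ> p}"
  shows "(\<Sum>p\<in>C. int (card (invariant_subsets (A \<union> B) k p))
                 - int (card (invariant_subsets (A \<union> B) (k + 1) p))) = int (card C)"
proof -
  define R where "R = {r. r permutes A \<and> r \<circ> \<sigma> = \<sigma> \<circ> r}"
  define T where "T = {t :: 'a \<Rightarrow> 'a. t permutes B}"
  have bij: "bij_betw (\<lambda>(r, t). r \<circ> t) (R \<times> T) C"
    unfolding R_def T_def C_def by (rule bij_betw_centralizer_permutes_disjoint_Un[OF AB fin(1) \<sigma>])
  have "finite R" "card T = fact k"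
    using fin card(2) by (simp_all add: R_def T_def card_permutations finite_permutations)
  have "(\<Sum>p\<in>C. int (card (invariant_subsets (A \<union> B) k p))
                 - int (card (invariant_subsets (A \<union> B) (k + 1) p)))
      = (\<Sum>r\<in>R. \<Sum>t\<in>T. int (card (invariant_subsets (A \<union> B) k (r \<circ> t)))
                 - int (card (invariant_subsets (A \<union> B) (k + 1) (r \<circ> t))))"
    by (simp add: sum.reindex_bij_betw[OF bij, symmetric] sum.cartesian_product case_prod_unfold)
  also have "\<dots> = (\<Sum>r\<in>R. int (fact k))"
    using sum_diff_card_invariant_subsets_comp_permutes_disjoint[OF AB fin _ card]
    by (simp add: R_def T_def)
  also have "\<dots> = int (card (R \<times> T))"
    using \<open>card T = fact k\<close> by (simp add: card_cartesian_product)
  finally show ?thesis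
    using bij_betw_same_card[OF bij] by simp
qed

lemma cycle_of_list_upt_apply:
  assumes "x \<in> {1..n}"
  shows "cycle_of_list [1..<n+1] x = x mod n + 1"
proof -
  define cs where "cs = [1..<n+1]"
  have "distinct cs" "length cs = n" by (simp_all add: cs_def)
  have x: "x - 1 < n" "cs ! (x - 1) = x"
    using assms by (auto simp: cs_def simp del: upt_Suc)
  have "cycle_of_list cs x = map (cycle_of_list cs) cs ! (x - 1)"
    using x \<open>length cs = n\<close> by simp
  also have "\<dots> = rotate1 cs ! (x - 1)"
    using cyclic_rotation[OF \<open>distinct cs\<close>, of 1] by simp
  also have "\<dots> = cs ! (x mod n)"
    using x assms \<open>length cs = n\<close> by (simp add: nth_rotate1)
  also have "\<dots> = x mod n + 1"
    using assms by (simp add: cs_def del: upt_Suc)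
  finally show ?thesis unfolding cs_def .
qed

lemma cycle_of_list_upt_no_fixpoint:
  assumes "n \<ge> 2" "x \<in> {1..n}"
  shows "cycle_of_list [1..<n+1] x \<noteq> x"
  using assms cycle_of_list_upt_apply[OF assms(2)] by (cases "x = n") auto

lemma centralizer_Sym_subset: "centralizer (Sym m) s \<subseteq> Sym m"
  by (auto simp: centralizer_def)

lemma card_centralizer_Sym_gt_0: "card (centralizer (Sym m) s) > 0"
  using finite_subset[OF centralizer_Sym_subset finite_Sym]
  by (auto simp: card_gt_0_iff centralizer_def intro!: exI[of _ id])

lemma irr_char_equal_rows_conj:
  assumes "x \<in> Sym (2 * n)" "g \<in> Sym (2 * n)" "n \<ge> 1"
  shows "irr_char (2 * n) [n, n] (x \<circ> g \<circ> inv x) = irr_char (2 * n) [n, n] g"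
  using irr_char_equal_rows[OF _ assms(3)] conj_in_Sym[OF assms(1,2)] assms(1,2)
    card_invariant_subsets_conj[of x]
  by (simp add: Sym_def)

lemma sum_irr_char_equal_rows_centralizer_cycle:
  assumes "n \<ge> 2"
  defines "C \<equiv> centralizer (Sym (2 * n)) (cycle_of_list [1..<n+1])"
  shows "(\<Sum>h\<in>C. irr_char (2 * n) [n, n] h) = of_nat (card C)"
proof -
  define A B \<sigma> where "A = {1..n}" and "B = {n+1..2*n}" and "\<sigma> = cycle_of_list [1..<n+1]"
  have AB: "A \<inter> B = {}" "A \<union> B = {1..2*n}" "finite A" "finite B" "card A = n" "card B = n"
    by (auto simp: A_def B_def)
  have "set [1..<n+1] = A" by (auto simp: A_def)
  then have \<sigma>: "\<sigma> permutes A" "\<forall>x\<in>A. \<sigma> x \<noteq> x"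
    using cycle_permutes[of "[1..<n+1]"] cycle_of_list_upt_no_fixpoint[OF assms(1)]
    by (simp_all add: \<sigma>_def A_def del: upt_Suc)
  have C: "C = {p. p permutes A \<union> B \<and> p \<circ> \<sigma> = \<sigma> \<circ> p}"
    by (auto simp: C_def \<sigma>_def centralizer_def Sym_def AB(2))
  have "(\<Sum>h\<in>C. irr_char (2 * n) [n, n] h)
      = of_int (\<Sum>h\<in>C. int (card (invariant_subsets (A \<union> B) n h))
                       - int (card (invariant_subsets (A \<union> B) (n + 1) h)))"
    using irr_char_equal_rows assms(1) by (simp add: C AB(2))
  also have "\<dots> = of_nat (card C)"
    using sum_centralizer_diff_card_invariant_subsets[OF AB(1,3,4) \<sigma> AB(5,6)] by (simp add: C)
  finally show ?thesis .
qed

theorem proposition3p3: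
  fixes n :: nat
  assumes "n \<ge> 2"
  shows "cf_inner (Sym (2*n))
           (ind_cf (Sym (2*n)) (centralizer (Sym (2*n)) (cycle_of_list [1..<n+1])) triv_cf)
           (irr_char (2*n) [n, n]) = 1"
proof -
  let ?C = "centralizer (Sym (2*n)) (cycle_of_list [1..<n+1])"
  have "cf_inner (Sym (2*n)) (ind_cf (Sym (2*n)) ?C triv_cf) (irr_char (2*n) [n, n])
          = cnj (\<Sum>h\<in>?C. irr_char (2*n) [n, n] h) / of_nat (card ?C)"
    using assms by (intro cf_inner_ind_triv_cf centralizer_Sym_subset irr_char_equal_rows_conj) auto
  also have "\<dots> = 1"
    using sum_irr_char_equal_rows_centralizer_cycle[OF assms] card_centralizer_Sym_gt_0[of "2*n"]
    by simp
  finally show ?thesis .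
qed

end
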